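(* For $n\in\{0,1,2,\dots\}$ define \[ b_n=\frac14\frac{(-1)^n}{n!}\sum_{k=0}^{n}(-1)^kS(n,k)(2k-1)!!, \] \[ c_n=\frac{(-1)^{n+1}}{n!}\sum_{k=1}^{n}(-1)^kS(n,k)\frac{k!}{2^k}\sum_{\ell=1}^{k}(-1)^{\ell}\binom{2k-\ell}{k}\frac{2^{\ell/2}}{\ell}\sin\frac{3\ell\pi}{4}. \] Then $\lim_{n\to\infty}b_n=+\infty$, $\lim_{n\to\infty}\frac{c_n}{b_n}=\pi$, and consequently $\lim_{n\to\infty}c_n=+\infty$.
   Context: $S(n,k)$ are the Stirling numbers of the second kind, given by $\frac{(e^x-1)^k}{k!}=\sum_{n\ge k}S(n,k)\frac{x^n}{n!}$. $(2k-1)!!=1\cdot3\cdots(2k-1)$ for $k\ge1$, and $(-1)!!=1$. These $b_n,c_n$ satisfy $W(z)=\sum_n(b_n\pi-c_n)z^n$ for $|z|<\ln2$, where $W(z)=\frac{\arctan\sqrt{2e^{-z}-1}}{\sqrt{2e^{-z}-1}}$ with principal branches. *)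

theory Defs
  imports "HOL-Analysis.Analysis" "HOL-Combinatorics.Stirling"
begin

text \<open>Odd double factorial: oddfact k = (2k-1)!! = 1*3*...*(2k-1), with oddfact 0 = (-1)!! = 1.\<close>
definition oddfact :: "nat \<Rightarrow> nat" where
  "oddfact k = (\<Prod>i<k. 2 * i + 1)"

definition b_seq :: "nat \<Rightarrow> real" where
  "b_seq n = (1/4) * ((-1) ^ n / fact n) *
     (\<Sum>k=0..n. (-1) ^ k * real (Stirling n k) * real (oddfact k))"

definition c_seq :: "nat \<Rightarrow> real" where
  "c_seq n = ((-1) ^ (n + 1) / fact n) *
     (\<Sum>k=1..n. (-1) ^ k * real (Stirling n k) * (fact k / 2 ^ k) *
        (\<Sum>l=1..k. (-1) ^ l * real ((2 * k - l) choose k) *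
           (2 powr (real l / 2) / real l) * sin (3 * real l * pi / 4)))"

end

theory Submission
  imports Defs "HOL-Complex_Analysis.Complex_Analysis" "HOL-Real_Asymp.Real_Asymp"
begin

(*
  With V = e^x - 1, the exponential generating function of the Stirling numbers gives
  4 b_n = [x^n] (2 e^(-x) - 1)^(-1/2) = [x^n] e^x (1 - V^2)^(-1/2).  The series
  (1 - V^2)^(-1/2) = sum_i binom(2i, i) 4^(-i) V^(2i) has nonnegative coefficients, and its
  coefficient of x^(2i+1) is i binom(2i, i) 4^(-i) >= sqrt(i) / 2, so b_n grows like sqrt n.

  An explicit antiderivative shows that the integral of (2 cos t)^(2k) over [pi/4, pi/2] is
  binom(2k, k) pi/4 plus the inner sum of c_n.  Hence pi b_n - c_n is the integral over
  [pi/4, pi/2] of the coefficient of x^n in 1 / (1 - q (1 - e^(-x))) at q = 2 cos^2 t in [0, 1].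
  On the closed unit disc the denominator has real part at least 1/6, so Cauchy's estimate
  bounds these coefficients by 6: pi b_n - c_n is bounded while b_n tends to infinity.
*)

lemma tendsto_divide_of_bounded_diff:
  fixes f g :: "'a \<Rightarrow> real"
  assumes "filterlim f at_top F" and "\<And>x. \<bar>a * f x - g x\<bar> \<le> B"
  shows "((\<lambda>x. g x / f x) \<longlongrightarrow> a) F"
proof -
  have f_ge_1: "eventually (\<lambda>x. 1 \<le> f x) F"
    using assms(1) by (simp add: filterlim_at_top)
  have "((\<lambda>x. (a * f x - g x) / f x) \<longlongrightarrow> 0) F"
  proof (rule Lim_null_comparison)
    show "eventually (\<lambda>x. norm ((a * f x - g x) / f x) \<le> B / f x) F"
      using f_ge_1 by eventually_elim
        (use assms(2) in \<open>auto simp: abs_divide intro!: divide_right_mono\<close>)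
    show "((\<lambda>x. B / f x) \<longlongrightarrow> 0) F"
      using assms(1) by (intro tendsto_divide_0[OF tendsto_const] filterlim_at_top_imp_at_infinity)
  qed
  then have "((\<lambda>x. a - (a * f x - g x) / f x) \<longlongrightarrow> a - 0) F"
    by (intro tendsto_intros)
  moreover have "eventually (\<lambda>x. a - (a * f x - g x) / f x = g x / f x) F"
    using f_ge_1 by eventually_elim (simp add: field_simps)
  ultimately show ?thesis
    by (simp add: tendsto_cong)
qed

lemma filterlim_at_top_of_bounded_diff:
  fixes f g :: "'a \<Rightarrow> real"
  assumes "filterlim f at_top F" and "0 < a" and "\<And>x. \<bar>a * f x - g x\<bar> \<le> B"
  shows "filterlim g at_top F"
proof (rule filterlim_at_top_mono)
  have "filterlim (\<lambda>x. a * f x) at_top F"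
    using tendsto_const assms(2,1) by (rule filterlim_tendsto_pos_mult_at_top)
  then have "filterlim (\<lambda>x. - B + a * f x) at_top F"
    by (rule filterlim_tendsto_add_at_top[OF tendsto_const])
  then show "filterlim (\<lambda>x. a * f x - B) at_top F"
    by simp
  show "eventually (\<lambda>x. a * f x - B \<le> g x) F"
    using assms(3) by (simp add: abs_le_iff algebra_simps)
qed

section \<open>Stirling numbers as coefficients\<close>

lemma Stirling_Suc_n_n: "Stirling (Suc n) n = Suc n choose 2"
  by (induction n) (auto simp: numeral_2_eq_2)

lemma fps_nth_exp_minus_one_power:
  fixes c :: "'a::field_char_0"
  shows "fps_nth ((fps_exp c - 1) ^ k) n = c ^ n * fact k * of_nat (Stirling n k) / fact n"
proof (induction k arbitrary: n)
  case 0
  then show ?case by (cases n) auto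
next
  case (Suc k)
  define W where "W = fps_exp c - (1 :: 'a fps)"
  have IH: "fps_nth (W ^ k) n = c ^ n * fact k * of_nat (Stirling n k) / fact n" for n
    using Suc.IH unfolding W_def by simp
  have deriv: "fps_deriv (W ^ Suc k) = fps_const (of_nat (Suc k) * c) * (W ^ Suc k + W ^ k)"
  proof -
    have "fps_deriv (W ^ Suc k) = fps_const (of_nat (Suc k)) * W ^ k * fps_deriv W"
      by (simp only: fps_deriv_power diff_Suc_1 mult.assoc) (simp add: algebra_simps)
    also have "fps_deriv W = fps_const c * (W + 1)"
      unfolding W_def by simp
    finally show ?thesis
      by (simp add: algebra_simps)
  qed
  show ?case unfolding W_def[symmetric]
  proof (induction n)
    case 0
    have "fps_nth W 0 = 0" unfolding W_def by simp
    then show ?case by (simp add: fps_nth_power_0 del: power_Suc)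
  next
    case (Suc n)
    have "of_nat (Suc n) * fps_nth (W ^ Suc k) (Suc n) = fps_nth (fps_deriv (W ^ Suc k)) n"
      by (simp only: fps_deriv_nth) simp
    also have "\<dots> = of_nat (Suc k) * c * (fps_nth (W ^ Suc k) n + fps_nth (W ^ k) n)"
      by (simp only: deriv fps_mult_left_const_nth fps_add_nth)
    finally have "fps_nth (W ^ Suc k) (Suc n) =
        of_nat (Suc k) * c * (fps_nth (W ^ Suc k) n + fps_nth (W ^ k) n) / of_nat (Suc n)"
      by (simp add: field_simps del: of_nat_Suc)
    also have "\<dots> = c ^ Suc n * fact (Suc k) * of_nat (Stirling (Suc n) (Suc k)) / fact (Suc n)"
      unfolding Suc.IH IH by (simp add: field_simps del: of_nat_Suc) (simp add: algebra_simps)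
    finally show ?case .
  qed
qed

lemma fps_power_minus: "(- F) ^ i = fps_const ((-1) ^ i) * (F :: 'a::comm_ring_1 fps) ^ i"
  by (induction i) (simp_all add: algebra_simps fps_const_neg[symmetric] del: fps_const_neg)

definition stirling_weight :: "nat \<Rightarrow> nat \<Rightarrow> real" where
  "stirling_weight n k = (-1) ^ (n + k) * fact k * real (Stirling n k) / fact n"

lemma fps_nth_one_minus_exp_neg_power:
  "fps_nth ((1 - fps_exp (-1 :: 'a::real_field)) ^ k) n = of_real (stirling_weight n k)"
proof -
  have "(1 - fps_exp (-1 :: 'a)) ^ k = fps_const ((-1) ^ k) * (fps_exp (-1) - 1) ^ k"
    by (simp flip: fps_power_minus)
  then show ?thesis
    by (simp add: fps_nth_exp_minus_one_power stirling_weight_def power_add)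
qed

lemma fps_binomial_neg_half_compose_square:
  fixes G :: "'a::field_char_0 fps"
  assumes "fps_nth G 0 = 0"
  shows "(fps_binomial (-1/2) oo G) ^ 2 * (1 + G) = 1"
proof -
  have "fps_binomial (-1/2 :: 'a) ^ 2 = inverse (1 + fps_X)"
    by (simp add: power2_eq_square flip: fps_binomial_add_mult fps_binomial_minus_one)
  then have "(fps_binomial (-1/2) oo G) ^ 2 = inverse (1 + fps_X) oo G"
    by (simp add: fps_compose_power[OF assms])
  also have "\<dots> = inverse (1 + G)"
    using assms by (simp add: fps_inverse_compose fps_compose_add_distrib)
  finally show ?thesis
    using assms by (simp add: inverse_mult_eq_1)
qed

lemma fps_eq_of_power2_eq:
  fixes Y Z :: "'a::idom fps"
  assumes "Y ^ 2 = Z ^ 2" and "fps_nth Y 0 + fps_nth Z 0 \<noteq> 0"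
  shows "Y = Z"
  using assms by (auto simp: power2_eq_iff)

text \<open>Both sides are square roots of \<open>(2 e\<^sup>-\<^sup>x - 1)\<^sup>-\<^sup>1\<close> with constant term 1.\<close>

lemma fps_binomial_neg_half_compose_exp:
  "fps_binomial (-1/2) oo (2 * (fps_exp (-1) - 1)) =
     fps_exp 1 * (fps_binomial (-1/2) oo - ((fps_exp 1 - 1) ^ 2 :: 'a::field_char_0 fps))"
  (is "?Y = fps_exp 1 * ?C")
proof (rule fps_eq_of_power2_eq)
  define w :: "'a fps" where "w = 1 + 2 * (fps_exp (-1) - 1)"
  have "?Y ^ 2 * w = 1"
    unfolding w_def by (rule fps_binomial_neg_half_compose_square) simp
  moreover have "(fps_exp 1 * ?C) ^ 2 * w = 1"
  proof -
    have "fps_exp (1 :: 'a) * fps_exp (-1) = 1"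
      by (simp flip: fps_exp_add_mult)
    then have E2w: "fps_exp 1 ^ 2 * w = 1 + - ((fps_exp 1 - 1) ^ 2 :: 'a fps)"
      unfolding w_def by (simp add: algebra_simps power2_eq_square)
    have "(fps_exp 1 * ?C) ^ 2 * w = (fps_exp 1 ^ 2 * w) * ?C ^ 2"
      by (simp add: power_mult_distrib mult_ac)
    also have "\<dots> = 1"
      unfolding E2w mult.commute[of "1 + _"]
      by (rule fps_binomial_neg_half_compose_square) (simp add: fps_nth_power_0)
    finally show ?thesis .
  qed
  moreover have "w \<noteq> 0"
  proof -
    have "fps_nth w 0 = 1"
      unfolding w_def by simp
    then show ?thesis
      by auto
  qed
  ultimately show "?Y ^ 2 = (fps_exp 1 * ?C) ^ 2"
    by (metis mult_right_cancel)
  show "fps_nth ?Y 0 + fps_nth (fps_exp 1 * ?C) 0 \<noteq> 0"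
    by simp
qed

section \<open>Growth of \<open>b\<^sub>n\<close>\<close>

lemma oddfact_eq_pochhammer: "real (oddfact k) = 2 ^ k * pochhammer (1/2) k"
  by (induction k) (simp_all add: oddfact_def pochhammer_Suc algebra_simps)

lemma b_seq_eq_weight_sum:
  "b_seq n = (\<Sum>k=0..n. stirling_weight n k * real (oddfact k) / fact k) / 4"
  unfolding b_seq_def stirling_weight_def sum_divide_distrib sum_distrib_left
  by (intro sum.cong refl) (simp add: power_add field_simps)

lemma b_seq_eq_fps_nth:
  "4 * b_seq n = fps_nth (fps_binomial (-1/2) oo (2 * (fps_exp (-1) - 1))) n"
proof -
  have "(2 * (fps_exp (-1) - 1 :: real fps)) ^ k = fps_const (2 ^ k) * (fps_exp (-1) - 1) ^ k"
    for k
    by (simp add: power_mult_distrib fps_numeral_fps_const fps_const_power)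
  then show ?thesis
    unfolding b_seq_eq_weight_sum fps_compose_nth
    by (simp, intro sum.cong refl)
      (simp add: gbinomial_pochhammer fps_nth_exp_minus_one_power stirling_weight_def
        oddfact_eq_pochhammer power_add field_simps)
qed

definition inv_sqrt_coeff :: "nat \<Rightarrow> real" where
  "inv_sqrt_coeff i = pochhammer (1/2) i / fact i"

lemma fps_binomial_neg_half_nth:
  "fps_nth (fps_binomial (-1/2 :: real)) i = (-1) ^ i * inv_sqrt_coeff i"
  by (simp add: inv_sqrt_coeff_def gbinomial_pochhammer)

definition asin_deriv_oo_exp_minus_1 :: "real fps" where
  "asin_deriv_oo_exp_minus_1 = fps_binomial (-1/2) oo - ((fps_exp 1 - 1) ^ 2)"

lemma b_seq_eq_fps_nth_exp_mult: "4 * b_seq n = fps_nth (fps_exp 1 * asin_deriv_oo_exp_minus_1) n"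
  unfolding b_seq_eq_fps_nth asin_deriv_oo_exp_minus_1_def fps_binomial_neg_half_compose_exp ..

lemma inv_sqrt_coeff_nonneg: "0 \<le> inv_sqrt_coeff i"
  unfolding inv_sqrt_coeff_def by (intro divide_nonneg_pos pochhammer_nonneg) auto

lemma asin_deriv_oo_exp_minus_1_nth:
  "fps_nth asin_deriv_oo_exp_minus_1 m =
     (\<Sum>i=0..m. inv_sqrt_coeff i * (fact (2 * i) * real (Stirling m (2 * i)) / fact m))"
proof -
  have "(- ((fps_exp 1 - 1) ^ 2)) ^ i = fps_const ((-1) ^ i) * (fps_exp (1 :: real) - 1) ^ (2 * i)"
    for i
    by (simp only: fps_power_minus power_mult)
  then show ?thesis
    unfolding asin_deriv_oo_exp_minus_1_def fps_compose_nth
    by (intro sum.cong refl)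
      (simp only: fps_mult_left_const_nth fps_binomial_neg_half_nth fps_nth_exp_minus_one_power,
        simp)
qed

lemma asin_deriv_oo_exp_minus_1_nth_nonneg: "0 \<le> fps_nth asin_deriv_oo_exp_minus_1 m"
  unfolding asin_deriv_oo_exp_minus_1_nth
  by (intro sum_nonneg mult_nonneg_nonneg inv_sqrt_coeff_nonneg) auto

lemma asin_deriv_oo_exp_minus_1_nth_odd_ge:
  "real i * inv_sqrt_coeff i \<le> fps_nth asin_deriv_oo_exp_minus_1 (Suc (2 * i))"
proof -
  have "fact (2 * i) * real (Stirling (Suc (2 * i)) (2 * i)) / fact (Suc (2 * i)) = real i"
    by (simp add: Stirling_Suc_n_n choose_two field_simps del: of_nat_Suc) (simp add: algebra_simps)
  then have "real i * inv_sqrt_coeff i =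
      inv_sqrt_coeff i * (fact (2 * i) * real (Stirling (Suc (2 * i)) (2 * i)) / fact (Suc (2 * i)))"
    by simp
  also have "\<dots> \<le> fps_nth asin_deriv_oo_exp_minus_1 (Suc (2 * i))"
    unfolding asin_deriv_oo_exp_minus_1_nth
    by (rule member_le_sum[where f = "\<lambda>j. inv_sqrt_coeff j * (fact (2 * j) *
          real (Stirling (Suc (2 * i)) (2 * j)) / fact (Suc (2 * i)))"])
      (auto simp del: fact_Suc intro!: mult_nonneg_nonneg divide_nonneg_pos inv_sqrt_coeff_nonneg)
  finally show ?thesis .
qed

lemma fps_nth_exp_mult_ge:
  fixes D :: "real fps"
  assumes "\<And>m. 0 \<le> fps_nth D m" and "j \<le> n"
  shows "fps_nth D j / fact (n - j) \<le> fps_nth (fps_exp 1 * D) n"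
proof -
  have "fps_nth D j / fact (n - j) = fps_nth (fps_exp 1) (n - j) * fps_nth D (n - (n - j))"
    using assms(2) by simp
  also have "\<dots> \<le> (\<Sum>i=0..n. fps_nth (fps_exp 1) i * fps_nth D (n - i))"
    by (rule member_le_sum[where f = "\<lambda>i. fps_nth (fps_exp 1) i * fps_nth D (n - i)"])
      (use assms(1) in auto)
  finally show ?thesis
    by (simp add: fps_mult_nth)
qed

lemma inv_sqrt_coeff_Suc:
  "inv_sqrt_coeff (Suc i) = inv_sqrt_coeff i * (2 * real i + 1) / (2 * real i + 2)"
  unfolding inv_sqrt_coeff_def by (simp add: pochhammer_Suc field_simps)

lemma inv_sqrt_coeff_power2_ge:
  assumes "1 \<le> i"
  shows "1 / (4 * real i) \<le> inv_sqrt_coeff i ^ 2"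
  using assms
proof (induction i rule: dec_induct)
  case base
  then show ?case by (simp add: inv_sqrt_coeff_def power2_eq_square)
next
  case (step i)
  have "0 < real i"
    using step(1) by simp
  then have "1 / (4 * real (Suc i)) * (4 * real i * (2 * real i + 2) ^ 2) \<le> (2 * real i + 1) ^ 2"
    by (simp add: field_simps power2_eq_square)
  then have "1 / (4 * real (Suc i)) \<le> 1 / (4 * real i) * ((2 * real i + 1) / (2 * real i + 2)) ^ 2"
    using \<open>0 < real i\<close> by (simp add: field_simps)
  also have "\<dots> \<le> inv_sqrt_coeff i ^ 2 * ((2 * real i + 1) / (2 * real i + 2)) ^ 2"
    using step(3) by (intro mult_right_mono) auto
  also have "\<dots> = inv_sqrt_coeff (Suc i) ^ 2"
    by (simp add: inv_sqrt_coeff_Suc power_mult_distrib power_divide)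
  finally show ?case .
qed

lemma sqrt_le_inv_sqrt_coeff: "sqrt (real i) \<le> 2 * real i * inv_sqrt_coeff i"
proof (cases "i = 0")
  case False
  then have "real i \<le> (2 * real i) ^ 2 * (1 / (4 * real i))"
    by (simp add: power2_eq_square)
  also have "\<dots> \<le> (2 * real i) ^ 2 * inv_sqrt_coeff i ^ 2"
    using False by (intro mult_left_mono inv_sqrt_coeff_power2_ge) auto
  finally show ?thesis
    by (intro real_le_lsqrt) (auto simp: inv_sqrt_coeff_nonneg power_mult_distrib)
qed simp

lemma b_seq_ge_sqrt:
  assumes "1 \<le> n"
  shows "sqrt (real ((n - 1) div 2)) \<le> 8 * b_seq n"
proof -
  define i where "i = (n - 1) div 2"
  have "Suc (2 * i) \<le> n" and "n - Suc (2 * i) \<le> 1"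
    using assms unfolding i_def by presburger+
  then have "fact (n - Suc (2 * i)) = (1 :: real)"
    by (cases "n - Suc (2 * i)") auto
  then have "fps_nth asin_deriv_oo_exp_minus_1 (Suc (2 * i)) \<le> 4 * b_seq n"
    using fps_nth_exp_mult_ge[OF asin_deriv_oo_exp_minus_1_nth_nonneg \<open>Suc (2 * i) \<le> n\<close>]
    by (simp add: b_seq_eq_fps_nth_exp_mult)
  with asin_deriv_oo_exp_minus_1_nth_odd_ge[of i] sqrt_le_inv_sqrt_coeff[of i] show ?thesis
    unfolding i_def[symmetric] by linarith
qed

lemma b_seq_at_top: "filterlim b_seq at_top sequentially"
proof (rule filterlim_at_top_mono)
  show "filterlim (\<lambda>n. sqrt ((real n - 2) / 2) / 8) at_top sequentially"
    by real_asymp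
  have lower: "sqrt ((real n - 2) / 2) / 8 \<le> b_seq n" if "1 \<le> n" for n
  proof -
    have "n \<le> 2 * ((n - 1) div 2) + 2"
      by presburger
    then have "real n \<le> real (2 * ((n - 1) div 2) + 2)"
      by (simp only: of_nat_le_iff)
    then have "sqrt ((real n - 2) / 2) \<le> sqrt (real ((n - 1) div 2))"
      by (intro real_sqrt_le_mono) simp
    with b_seq_ge_sqrt[OF that] show ?thesis
      by linarith
  qed
  show "eventually (\<lambda>n. sqrt ((real n - 2) / 2) / 8 \<le> b_seq n) sequentially"
    using eventually_ge_at_top[of 1] by (rule eventually_mono) (rule lower)
qed

section \<open>The integral of \<open>(2 cos t)\<^sup>2\<^sup>k\<close> over \<open>[\<pi>/4, \<pi>/2]\<close>\<close>

lemma sum_choose_power_recurrence: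
  fixes b :: "'a::comm_ring_1"
  shows "(1 - b) * (\<Sum>j\<le>Suc k. of_nat (Suc k + j choose j) * b ^ j) =
    (\<Sum>j\<le>k. of_nat (k + j choose j) * b ^ j) +
      of_nat (Suc (k + k) choose k) * b ^ Suc k * (1 - 2 * b)"
proof -
  define G where "G = (\<Sum>j\<le>Suc k. of_nat (Suc k + j choose j) * b ^ j)"
  define g where "g = (\<Sum>j\<le>k. of_nat (k + j choose j) * b ^ j)"
  define Z where "Z = Suc (k + k) choose k"
  have pascal: "of_nat (Suc k + j choose j) =
      (of_nat (k + j choose j) :: 'a) + (if j = 0 then 0 else of_nat (k + j choose (j - 1)))" for j
    by (cases j) (simp_all add: add_Suc_right)
  have Z1: "Suc (k + k) choose Suc k = Z"
    unfolding Z_def using binomial_symmetric[of "Suc k" "Suc (k + k)"] by simp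
  have Z2: "Suc (Suc (k + k)) choose Suc k = 2 * Z"
    using binomial_Suc_Suc[of "Suc (k + k)" k] Z1 unfolding Z_def by simp
  have "G = (\<Sum>j\<le>Suc k. of_nat (k + j choose j) * b ^ j) +
      (\<Sum>j\<le>Suc k. (if j = 0 then 0 else of_nat (k + j choose (j - 1))) * b ^ j)"
    unfolding G_def pascal by (simp add: algebra_simps sum.distrib)
  also have "(\<Sum>j\<le>Suc k. of_nat (k + j choose j) * b ^ j) = g + of_nat Z * b ^ Suc k"
    unfolding g_def Z1[symmetric] by (simp del: binomial_Suc_Suc)
  also have "(\<Sum>j\<le>Suc k. (if j = 0 then 0 else of_nat (k + j choose (j - 1))) * b ^ j) =
      (\<Sum>j\<le>k. of_nat (Suc k + j choose j) * b ^ Suc j)"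
    by (subst sum.atMost_Suc_shift) (simp add: add_Suc_right del: binomial_Suc_Suc)
  also have "\<dots> = b * (G - of_nat (2 * Z) * b ^ Suc k)"
    unfolding G_def Z2[symmetric]
    by (simp add: sum_distrib_left algebra_simps del: binomial_Suc_Suc)
  finally have "(1 - b) * G = g + of_nat Z * b ^ Suc k * (1 - 2 * b)"
    by (simp add: algebra_simps)
  then show ?thesis
    unfolding G_def g_def Z_def .
qed

lemma points_sum_Suc:
  fixes a b :: "'a::comm_ring_1"
  assumes "a + b = 1"
  shows "(\<Sum>j\<le>Suc k. of_nat (Suc k + j choose j) * (a ^ Suc (Suc k) * b ^ j)) =
    (\<Sum>j\<le>k. of_nat (k + j choose j) * (a ^ Suc k * b ^ j)) +
      of_nat (Suc (k + k) choose k) * (a * b) ^ Suc k * (a - b)"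
proof -
  have a: "a = 1 - b" and ab: "1 - 2 * b = a - b"
    using assms by (simp_all add: algebra_simps)
  have "(\<Sum>j\<le>Suc k. of_nat (Suc k + j choose j) * (a ^ Suc (Suc k) * b ^ j)) =
      a ^ Suc k * ((1 - b) * (\<Sum>j\<le>Suc k. of_nat (Suc k + j choose j) * b ^ j))"
    unfolding a by (simp add: sum_distrib_left algebra_simps)
  also have "\<dots> = a ^ Suc k * ((\<Sum>j\<le>k. of_nat (k + j choose j) * b ^ j) +
      of_nat (Suc (k + k) choose k) * b ^ Suc k * (a - b))"
    unfolding sum_choose_power_recurrence ab ..
  finally show ?thesis
    by (simp add: sum_distrib_left power_mult_distrib algebra_simps)
qed

text \<open>If two players win each round with probabilities \<open>a\<close> and \<open>b\<close>, the two sums below are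
  the probabilities that the first, resp. the second, is the first to win \<open>k + 1\<close> rounds.\<close>

lemma points_identity:
  fixes a b :: "'a::comm_ring_1"
  assumes "a + b = 1"
  shows "(\<Sum>j\<le>k. of_nat (k + j choose j) * (a ^ Suc k * b ^ j + b ^ Suc k * a ^ j)) = 1"
proof (induction k)
  case 0
  then show ?case using assms by simp
next
  case (Suc k)
  have "b + a = 1"
    using assms by (simp add: add.commute)
  have "(\<Sum>j\<le>Suc k. of_nat (Suc k + j choose j) *
        (a ^ Suc (Suc k) * b ^ j + b ^ Suc (Suc k) * a ^ j)) =
      (\<Sum>j\<le>Suc k. of_nat (Suc k + j choose j) * (a ^ Suc (Suc k) * b ^ j)) +
      (\<Sum>j\<le>Suc k. of_nat (Suc k + j choose j) * (b ^ Suc (Suc k) * a ^ j))"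
    by (simp only: distrib_left sum.distrib)
  also have "\<dots> = (\<Sum>j\<le>k. of_nat (k + j choose j) * (a ^ Suc k * b ^ j)) +
      (\<Sum>j\<le>k. of_nat (k + j choose j) * (b ^ Suc k * a ^ j))"
    unfolding points_sum_Suc[OF assms] points_sum_Suc[OF \<open>b + a = 1\<close>]
    by (simp add: algebra_simps)
  also have "\<dots> = 1"
    using Suc.IH by (simp only: distrib_left sum.distrib)
  finally show ?case .
qed

lemma cos_power_odd_eq_points_sum:
  fixes t :: real
  assumes "cos t \<noteq> 0"
  shows "(2 * cos t) ^ Suc (2 * k) =
    (\<Sum>j\<le>k. real (k + j choose j) * (2 * cos (real (Suc (k - j)) * t) * (2 * cos t) ^ (k - j)))"
proof -
  define c where "c = 2 * cos t"
  have "c \<noteq> 0"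
    using assms unfolding c_def by simp
  define a where "a = cis t / complex_of_real c"
  define b where "b = cis (- t) / complex_of_real c"
  have cis_sum: "cis x + cis (- x) = complex_of_real (2 * cos x)" for x
    by (simp add: complex_eq_iff)
  have "a + b = 1"
    using \<open>c \<noteq> 0\<close> unfolding a_def b_def c_def by (simp add: add_divide_distrib[symmetric] cis_sum)
  have summand: "complex_of_real (c ^ Suc (2 * k)) * (a ^ Suc k * b ^ j + b ^ Suc k * a ^ j) =
      complex_of_real (2 * cos (real (Suc (k - j)) * t) * c ^ (k - j))" if "j \<le> k" for j
  proof -
    have "c ^ Suc (2 * k) = c ^ (k - j) * (c ^ Suc k * c ^ j)"
      using that by (simp add: mult_2 flip: power_add)
    then have "complex_of_real (c ^ Suc (2 * k)) * (a ^ Suc k * b ^ j + b ^ Suc k * a ^ j) =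
        complex_of_real (c ^ (k - j)) *
          (cis t ^ Suc k * cis (- t) ^ j + cis (- t) ^ Suc k * cis t ^ j)"
      using \<open>c \<noteq> 0\<close> by (simp add: a_def b_def power_divide field_simps)
    also have "cis t ^ Suc k * cis (- t) ^ j = cis (real (Suc (k - j)) * t)"
      using that by (simp only: Complex.DeMoivre cis_mult) (simp add: of_nat_diff algebra_simps)
    also have "cis (- t) ^ Suc k * cis t ^ j = cis (- (real (Suc (k - j)) * t))"
      using that by (simp only: Complex.DeMoivre cis_mult) (simp add: of_nat_diff algebra_simps)
    finally show ?thesis
      by (simp add: cis_sum)
  qed
  have "complex_of_real (c ^ Suc (2 * k)) = complex_of_real (c ^ Suc (2 * k)) *
      (\<Sum>j\<le>k. of_nat (k + j choose j) * (a ^ Suc k * b ^ j + b ^ Suc k * a ^ j))"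
    unfolding points_identity[OF \<open>a + b = 1\<close>] by simp
  also have "\<dots> = (\<Sum>j\<le>k. of_nat (k + j choose j) *
      (complex_of_real (c ^ Suc (2 * k)) * (a ^ Suc k * b ^ j + b ^ Suc k * a ^ j)))"
    by (simp add: sum_distrib_left mult_ac)
  also have "\<dots> = complex_of_real
      (\<Sum>j\<le>k. real (k + j choose j) * (2 * cos (real (Suc (k - j)) * t) * c ^ (k - j)))"
    unfolding of_real_sum
    by (intro sum.cong refl) (simp only: atMost_iff summand of_real_mult of_real_of_nat_eq)
  finally show ?thesis
    unfolding c_def by (simp only: of_real_eq_iff)
qed

lemma cos_power_odd_eq_sum:
  fixes t :: real
  assumes "cos t \<noteq> 0"
  shows "(\<Sum>l\<le>k. real (2 * k - l choose k) * (2 * cos (real (Suc l) * t)) * (2 * cos t) ^ l) =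
    (2 * cos t) ^ Suc (2 * k)"
  unfolding cos_power_odd_eq_points_sum[OF assms] atMost_atLeast0
proof (subst (2) sum.atLeastAtMost_rev, intro sum.cong refl)
  fix l assume "l \<in> {0..k}"
  then have "k + (k - l) = 2 * k - l" and "2 * k - l - (k - l) = k"
    by auto
  then have "k + (k - l) choose (k - l) = 2 * k - l choose k"
    using binomial_symmetric[of "k - l" "2 * k - l"] by simp
  with \<open>l \<in> {0..k}\<close> show "real (2 * k - l choose k) * (2 * cos (real (Suc l) * t)) * (2 * cos t) ^ l =
      real (k + (k + 0 - l) choose (k + 0 - l)) *
        (2 * cos (real (Suc (k - (k + 0 - l))) * t) * (2 * cos t) ^ (k - (k + 0 - l)))"
    by simp
qed

lemma has_real_derivative_cos_power_mult_sin:
  assumes "1 \<le> l"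
  shows "((\<lambda>t. (2 * cos t) ^ l * sin (real l * t) / real l) has_real_derivative
    2 * (2 * cos x) ^ (l - 1) * cos (real (Suc l) * x)) (at x)"
proof -
  have "real l \<noteq> 0"
    using assms by simp
  have pow: "(2 * cos x) ^ l = (2 * cos x) ^ (l - 1) * (2 * cos x)"
    using assms by (cases l) auto
  have cos_Suc: "cos (real (Suc l) * x) = cos (real l * x) * cos x - sin (real l * x) * sin x"
    by (simp add: distrib_right cos_add)
  show ?thesis
    by (rule derivative_eq_intros refl \<open>real l \<noteq> 0\<close>)+
      (unfold pow cos_Suc, use \<open>real l \<noteq> 0\<close> in \<open>simp add: field_simps\<close>)
qed

definition cos_power_antideriv :: "nat \<Rightarrow> real \<Rightarrow> real" where
  "cos_power_antideriv k t = real (2 * k choose k) * t +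
     (\<Sum>l=1..k. real (2 * k - l choose k) * ((2 * cos t) ^ l * sin (real l * t) / real l))"

lemma cos_power_antideriv_has_real_derivative:
  assumes "cos x \<noteq> 0"
  shows "(cos_power_antideriv k has_real_derivative (2 * cos x) ^ (2 * k)) (at x)"
proof -
  define c where "c = 2 * cos x"
  define D where "D = real (2 * k choose k) * 1 +
    (\<Sum>l=1..k. real (2 * k - l choose k) * (2 * c ^ (l - 1) * cos (real (Suc l) * x)))"
  have "(cos_power_antideriv k has_real_derivative D) (at x)"
    unfolding cos_power_antideriv_def[abs_def] D_def c_def
    by (intro derivative_intros DERIV_cmult has_real_derivative_cos_power_mult_sin) auto
  moreover have "c * D = c * c ^ (2 * k)"
  proof -
    have summand: "c * (real (2 * k - l choose k) * (2 * c ^ (l - 1) * cos (real (Suc l) * x))) =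
        real (2 * k - l choose k) * (2 * cos (real (Suc l) * x)) * c ^ l" if "l \<in> {1..k}" for l
      using that by (cases l) (simp_all add: mult_ac)
    have "c * D = real (2 * k choose k) * c +
        (\<Sum>l=1..k. c * (real (2 * k - l choose k) * (2 * c ^ (l - 1) * cos (real (Suc l) * x))))"
      unfolding D_def by (simp add: distrib_left sum_distrib_left)
    also have "\<dots> = real (2 * k choose k) * c +
        (\<Sum>l=1..k. real (2 * k - l choose k) * (2 * cos (real (Suc l) * x)) * c ^ l)"
      by (simp only: sum.cong[OF refl summand])
    also have "\<dots> = (\<Sum>l\<le>k. real (2 * k - l choose k) * (2 * cos (real (Suc l) * x)) * c ^ l)"
      by (simp add: atMost_atLeast0 sum.atLeast_Suc_atMost c_def)
    also have "\<dots> = c * c ^ (2 * k)"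
      unfolding c_def cos_power_odd_eq_sum[OF assms] by simp
    finally show ?thesis .
  qed
  then have "D = c ^ (2 * k)"
    using assms unfolding c_def by simp
  ultimately show ?thesis
    unfolding c_def by simp
qed

definition c_inner_sum :: "nat \<Rightarrow> real" where
  "c_inner_sum k = (\<Sum>l=1..k. (-1) ^ l * real ((2 * k - l) choose k) *
     (2 powr (real l / 2) / real l) * sin (3 * real l * pi / 4))"

lemma c_inner_sum_eq_antideriv:
  "c_inner_sum k = real (2 * k choose k) * (pi / 4) - cos_power_antideriv k (pi / 4)"
proof -
  have "(-1) ^ l * real (2 * k - l choose k) * (2 powr (real l / 2) / real l) *
      sin (3 * real l * pi / 4) =
      - (real (2 * k - l choose k) * ((2 * cos (pi / 4)) ^ l * sin (real l * (pi / 4)) / real l))"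
    for l
  proof -
    have "(2 * cos (pi / 4)) ^ l = (2 powr (1 / 2)) ^ l"
      by (simp add: cos_45 powr_half_sqrt)
    also have "\<dots> = 2 powr (real l / 2)"
      by (simp add: powr_realpow powr_powr flip: powr_realpow)
    finally have "2 powr (real l / 2) = (2 * cos (pi / 4)) ^ l" ..
    moreover have "sin (3 * real l * pi / 4) = - ((-1) ^ l * sin (real l * (pi / 4)))"
    proof -
      have angle: "3 * real l * pi / 4 = real l * pi - real l * (pi / 4)"
        by (simp add: field_simps)
      show ?thesis
        unfolding angle sin_diff sin_npi cos_npi by simp
    qed
    ultimately show ?thesis
      by (simp add: field_simps)
  qed
  then show ?thesis
    unfolding c_inner_sum_def cos_power_antideriv_def by (simp add: sum_negf)
qed

lemma cos_power_antideriv_pi_half: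
  "cos_power_antideriv k (pi / 2) = real (2 * k choose k) * (pi / 2)"
  unfolding cos_power_antideriv_def by (simp add: zero_power)

lemma cos_power_has_integral:
  "((\<lambda>t. (2 * cos t) ^ (2 * k)) has_integral real (2 * k choose k) * pi / 4 + c_inner_sum k)
     {pi / 4..pi / 2}"
proof -
  have "((\<lambda>t. (2 * cos t) ^ (2 * k)) has_integral
      cos_power_antideriv k (pi / 2) - cos_power_antideriv k (pi / 4)) {pi / 4..pi / 2}"
  proof (rule fundamental_theorem_of_calculus_interior)
    show "continuous_on {pi / 4..pi / 2} (cos_power_antideriv k)"
      unfolding cos_power_antideriv_def by (auto intro!: continuous_intros)
    fix x assume "x \<in> {pi / 4<..<pi / 2}"
    then have "cos x > 0"
      by (intro cos_gt_zero_pi) auto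
    then show "(cos_power_antideriv k has_vector_derivative (2 * cos x) ^ (2 * k)) (at x)"
      using cos_power_antideriv_has_real_derivative[of x k]
      by (simp add: has_real_derivative_iff_has_vector_derivative)
  qed simp
  moreover have "cos_power_antideriv k (pi / 2) - cos_power_antideriv k (pi / 4) =
      real (2 * k choose k) * pi / 4 + c_inner_sum k"
    by (simp add: cos_power_antideriv_pi_half c_inner_sum_eq_antideriv field_simps)
  ultimately show ?thesis
    by simp
qed

section \<open>A uniform bound by Cauchy's estimate\<close>

lemma fps_nth_inverse_one_minus_const_mult:
  fixes G :: "'a::field_char_0 fps"
  assumes "fps_nth G 0 = 0"
  shows "fps_nth (inverse (1 - fps_const q * G)) n = (\<Sum>k=0..n. q ^ k * fps_nth (G ^ k) n)"
proof -
  have "inverse (1 - fps_const q * fps_X) = Abs_fps (\<lambda>k. q ^ k)"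
    using one_minus_const_fps_X_neg_power'[of 1 q] by simp
  moreover have "inverse (1 - fps_const q * G) = inverse (1 - fps_const q * fps_X) oo G"
    using assms by (simp add: fps_inverse_compose fps_compose_sub_distrib fps_compose_mult_distrib)
  ultimately show ?thesis
    by (simp add: fps_compose_nth)
qed

lemma Re_one_minus_scaled_exp_ge:
  fixes q :: real and z :: complex
  assumes "0 \<le> q" "q \<le> 1" "norm z \<le> 1"
  shows "1 / 6 \<le> Re (1 - complex_of_real q * (1 - exp (- z)))"
proof -
  have "\<bar>Re z\<bar> \<le> 1" and "\<bar>Im z\<bar> \<le> 1"
    using abs_Re_le_cmod[of z] abs_Im_le_cmod[of z] assms(3) by linarith+
  have "1 / 3 \<le> exp (- Re z)"
  proof -
    have "1 / 3 \<le> inverse (exp (1 :: real))"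
      using exp_le by (simp add: field_simps)
    also have "\<dots> \<le> exp (- Re z)"
      using \<open>\<bar>Re z\<bar> \<le> 1\<close> by (simp flip: exp_minus)
    finally show ?thesis .
  qed
  moreover have "1 / 2 \<le> cos (Im z)"
  proof -
    have "cos (pi / 3) \<le> cos \<bar>Im z\<bar>"
      using \<open>\<bar>Im z\<bar> \<le> 1\<close> pi_gt3 by (intro cos_monotone_0_pi_le) auto
    then show ?thesis
      by (simp add: cos_60)
  qed
  ultimately have "1 / 3 * (1 / 2) \<le> Re (exp (- z))"
    unfolding Re_exp by (intro mult_mono) auto
  then have "1 - q + q * (1 / 6) \<le> 1 - q + q * Re (exp (- z))"
    using assms(1) by (intro add_left_mono mult_left_mono) auto
  then show ?thesis
    using assms(2) by (simp add: algebra_simps)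
qed

lemma norm_fps_nth_inverse_one_minus_exp_le:
  fixes q :: real
  assumes "0 \<le> q" "q \<le> 1"
  shows "norm (fps_nth (inverse (1 - fps_const (complex_of_real q) * (1 - fps_exp (-1)))) n) \<le> 6"
proof -
  define f where "f z = inverse (1 - complex_of_real q * (1 - exp (- z)))" for z
  have den: "1 / 6 \<le> norm (1 - complex_of_real q * (1 - exp (- z)))" if "norm z \<le> 1" for z
    using Re_one_minus_scaled_exp_ge[OF assms that] complex_Re_le_cmod order_trans by blast
  then have nonzero: "1 - complex_of_real q * (1 - exp (- z)) \<noteq> 0" if "norm z \<le> 1" for z
    using that by fastforce
  have "f has_fps_expansion inverse (1 - fps_const (complex_of_real q) * (1 - fps_exp (-1)))"
    unfolding f_def[abs_def] by (intro fps_expansion_intros) simp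
  then have "fps_nth (inverse (1 - fps_const (complex_of_real q) * (1 - fps_exp (-1)))) n =
      (deriv ^^ n) f 0 / fact n"
    by (rule fps_nth_fps_expansion)
  moreover have "norm ((deriv ^^ n) f 0) \<le> fact n * 6 / 1 ^ n"
  proof (rule Cauchy_inequality)
    show "f holomorphic_on ball 0 1" and "continuous_on (cball 0 1) f"
      unfolding f_def using nonzero by (auto intro!: holomorphic_intros continuous_intros)
    show "norm (f z) \<le> 6" if "norm (0 - z) = 1" for z
    proof -
      have "inverse (norm (1 - complex_of_real q * (1 - exp (- z)))) \<le> inverse (1 / 6)"
        using den[of z] that by (intro le_imp_inverse_le) auto
      then show ?thesis
        unfolding f_def norm_inverse by simp
    qed
  qed simp
  ultimately show ?thesis
    by (simp add: norm_divide divide_le_eq mult.commute)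
qed

lemma stirling_weight_sum_bound:
  fixes q :: real
  assumes "0 \<le> q" "q \<le> 1"
  shows "\<bar>\<Sum>k=0..n. stirling_weight n k * q ^ k\<bar> \<le> 6"
proof -
  have "complex_of_real (\<Sum>k=0..n. stirling_weight n k * q ^ k) =
      fps_nth (inverse (1 - fps_const (complex_of_real q) * (1 - fps_exp (-1)))) n"
    by (simp add: fps_nth_inverse_one_minus_const_mult fps_nth_one_minus_exp_neg_power mult.commute)
  then show ?thesis
    using norm_fps_nth_inverse_one_minus_exp_le[OF assms, of n] by (metis norm_of_real)
qed

section \<open>The difference \<open>\<pi> b\<^sub>n - c\<^sub>n\<close>\<close>

lemma c_seq_eq_weight_sum: "c_seq n = - (\<Sum>k=0..n. stirling_weight n k * c_inner_sum k / 2 ^ k)"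
proof -
  have "c_seq n = - (\<Sum>k=1..n. stirling_weight n k * c_inner_sum k / 2 ^ k)"
    unfolding c_seq_def c_inner_sum_def[symmetric] stirling_weight_def
      sum_distrib_left sum_negf[symmetric]
    by (intro sum.cong refl) (simp add: power_add field_simps)
  then show ?thesis
    by (simp add: sum.atLeast_Suc_atMost[of 0 n] c_inner_sum_def)
qed

lemma oddfact_eq_central_binomial: "real (oddfact k) = real (2 * k choose k) * fact k / 2 ^ k"
proof -
  have "real (2 * k choose k) = fact (2 * k) / (fact k * fact k)"
    by (simp add: binomial_fact)
  also have "\<dots> = 2 ^ k * 2 ^ k * pochhammer (1 / 2) k / fact k"
    unfolding fact_double by (simp add: mult_2 power_add)
  finally show ?thesis
    by (simp add: oddfact_eq_pochhammer)
qed

lemma pi_b_seq_minus_c_seq_eq: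
  "pi * b_seq n - c_seq n =
     (\<Sum>k=0..n. stirling_weight n k * ((real (2 * k choose k) * pi / 4 + c_inner_sum k) / 2 ^ k))"
  unfolding b_seq_eq_weight_sum c_seq_eq_weight_sum sum_distrib_left
  by (simp add: oddfact_eq_central_binomial sum_divide_distrib sum_distrib_left field_simps
      flip: sum.distrib)

lemma pi_b_seq_minus_c_seq_has_integral:
  "((\<lambda>t. \<Sum>k=0..n. stirling_weight n k * (2 * cos t ^ 2) ^ k) has_integral pi * b_seq n - c_seq n)
     {pi / 4..pi / 2}"
  unfolding pi_b_seq_minus_c_seq_eq
proof (intro has_integral_sum)
  fix k
  have power_eq: "(2 * cos t) ^ (2 * k) / 2 ^ k = (2 * cos t ^ 2) ^ k" for t :: real
  proof -
    have "(2 * cos t) ^ (2 * k) = ((2 * cos t) ^ 2) ^ k"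
      by (rule power_mult)
    also have "(2 * cos t) ^ 2 = 2 * (2 * cos t ^ 2)"
      by (simp add: power2_eq_square)
    also have "(2 * (2 * cos t ^ 2)) ^ k = 2 ^ k * (2 * cos t ^ 2) ^ k"
      by (rule power_mult_distrib)
    finally show ?thesis
      by simp
  qed
  have "((\<lambda>t. stirling_weight n k * ((2 * cos t) ^ (2 * k) / 2 ^ k)) has_integral
      stirling_weight n k * ((real (2 * k choose k) * pi / 4 + c_inner_sum k) / 2 ^ k)) {pi / 4..pi / 2}"
    by (intro has_integral_mult_right has_integral_divide cos_power_has_integral)
  then show "((\<lambda>t. stirling_weight n k * (2 * cos t ^ 2) ^ k) has_integral
      stirling_weight n k * ((real (2 * k choose k) * pi / 4 + c_inner_sum k) / 2 ^ k)) {pi / 4..pi / 2}"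
    unfolding power_eq .
qed simp

lemma abs_pi_b_seq_minus_c_seq_le: "\<bar>pi * b_seq n - c_seq n\<bar> \<le> 3 * pi / 2"
proof -
  have "norm (\<Sum>k=0..n. stirling_weight n k * (2 * cos t ^ 2) ^ k) \<le> 6"
    if "t \<in> {pi / 4..pi / 2} - {}" for t
    unfolding real_norm_def
  proof (rule stirling_weight_sum_bound)
    have "cos t \<le> cos (pi / 4)"
      using that by (intro cos_monotone_0_pi_le) auto
    moreover have "0 \<le> cos t"
      using that by (intro cos_ge_zero) auto
    ultimately have "cos t ^ 2 \<le> (sqrt 2 / 2) ^ 2"
      by (intro power_mono) (auto simp: cos_45)
    then show "2 * cos t ^ 2 \<le> 1"
      by (simp add: power_divide)
  qed simp
  from has_integral_bound_real[OF _ _ pi_b_seq_minus_c_seq_has_integral this, where S = "{}"]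
  show ?thesis
    by simp
qed

theorem theorem6p3:
  shows "filterlim b_seq at_top sequentially \<and>
         (\<lambda>n. c_seq n / b_seq n) \<longlonglongrightarrow> pi \<and>
         filterlim c_seq at_top sequentially"
  using b_seq_at_top
    tendsto_divide_of_bounded_diff[OF b_seq_at_top abs_pi_b_seq_minus_c_seq_le]
    filterlim_at_top_of_bounded_diff[OF b_seq_at_top pi_gt_zero abs_pi_b_seq_minus_c_seq_le]
  by blast

end
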